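(* Let $P,Q\in\Gamma_n$ and $0<r\le R$ with $r\le p_i/q_i\le R$ for all $i$. Let $s,t\in\mathbb{R}$. If $s\ge t$ and $t\le2$, then $$\frac{1}{4r^{t-2}}\Big(\frac{r+1}{2}\Big)^{s-2}\Phi_t(P\|Q)\le\Omega_s(Q\|P)\le\frac{1}{4R^{t-2}}\Big(\frac{R+1}{2}\Big)^{s-2}\Phi_t(P\|Q).$$ If $s\le t$ and $t\ge2$, then $$\frac{1}{4R^{t-2}}\Big(\frac{R+1}{2}\Big)^{s-2}\Phi_t(P\|Q)\le\Omega_s(Q\|P)\le\frac{1}{4r^{t-2}}\Big(\frac{r+1}{2}\Big)^{s-2}\Phi_t(P\|Q).$$
   Context: $\Gamma_n=\{P=(p_1,\dots,p_n): p_i>0,\ \sum_i p_i=1\}$, $n\ge2$. For $P,Q\in\Gamma_n$ and $s\in\mathbb{R}$: $\Phi_s(P\|Q)=[s(s-1)]^{-1}\big[\sum_i p_i^s q_i^{1-s}-1\big]$ for $s\ne0,1$; $\Phi_0(P\|Q)=\sum_i q_i\ln(q_i/p_i)$; $\Phi_1(P\|Q)=\sum_i p_i\ln(p_i/q_i)$. $\Omega_s(Q\|P)=[s(s-1)]^{-1}\big[\sum_i q_i\big(\frac{p_i+q_i}{2q_i}\big)^s-1\big]$ for $s\ne0,1$; $\Omega_0(Q\|P)=\sum_i q_i\ln\frac{2q_i}{p_i+q_i}$; $\Omega_1(Q\|P)=\sum_i\frac{p_i+q_i}{2}\ln\frac{p_i+q_i}{2q_i}$. *)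

theory Defs
  imports Complex_Main
begin

definition Gamma :: "nat \<Rightarrow> (nat \<Rightarrow> real) set" where
  "Gamma n = {p. (\<forall>i<n. p i > 0) \<and> (\<Sum>i<n. p i) = 1}"

definition Phi :: "nat \<Rightarrow> real \<Rightarrow> (nat \<Rightarrow> real) \<Rightarrow> (nat \<Rightarrow> real) \<Rightarrow> real" where
  "Phi n s p q =
     (if s = 0 then (\<Sum>i<n. q i * ln (q i / p i))
      else if s = 1 then (\<Sum>i<n. p i * ln (p i / q i))
      else ((\<Sum>i<n. p i powr s * q i powr (1 - s)) - 1) / (s * (s - 1)))"

text \<open>Omega_s(Q||P) (argument order: q first, then p).\<close>
definition Omega :: "nat \<Rightarrow> real \<Rightarrow> (nat \<Rightarrow> real) \<Rightarrow> (nat \<Rightarrow> real) \<Rightarrow> real" where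
  "Omega n s q p =
     (if s = 0 then (\<Sum>i<n. q i * ln (2 * q i / (p i + q i)))
      else if s = 1 then (\<Sum>i<n. (p i + q i) / 2 * ln ((p i + q i) / (2 * q i)))
      else ((\<Sum>i<n. q i * ((p i + q i) / (2 * q i)) powr s) - 1) / (s * (s - 1)))"

end

theory Submission
  imports Defs "HOL-Analysis.Convex"
begin

text \<open>Both quantities are f-divergences \<open>\<Sum>i. q i * f (p i / q i)\<close>: \<open>Phi_t\<close> with a generator
  \<open>phi_gen t\<close> whose second derivative is \<open>x powr (t - 2)\<close>, and \<open>Omega_s\<close> with
  \<open>x \<mapsto> phi_gen s ((x + 1) / 2)\<close>, whose second derivative is \<open>((x + 1) / 2) powr (s - 2) / 4\<close>.
  Both generators vanish to first order at 1, and every ratio \<open>p i / q i\<close> lies in \<open>[r, R]\<close>, which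
  contains 1. So if \<open>c\<close> bounds the ratio of the two second derivatives on \<open>[r, R]\<close> from below
  (above), then \<open>c\<close> times the first generator lies below (above) the second one on \<open>[r, R]\<close>, and
  summing with the weights \<open>q i\<close> compares \<open>c * Phi_t\<close> with \<open>Omega_s\<close>. The ratio
  \<open>((x + 1) / 2) powr (s - 2) / (4 * x powr (t - 2))\<close> is increasing for \<open>t \<le> s, t \<le> 2\<close> and
  decreasing for \<open>s \<le> t, 2 \<le> t\<close>, so its extreme values on \<open>[r, R]\<close> are taken at the endpoints.\<close>

lemma le_by_second_derivative:
  fixes f g f' g' f'' g'' :: "real \<Rightarrow> real"
  assumes "convex C" "c \<in> C" "x \<in> C"
    and "\<And>y. y \<in> C \<Longrightarrow> (f has_real_derivative f' y) (at y)"
    and "\<And>y. y \<in> C \<Longrightarrow> (f' has_real_derivative f'' y) (at y)"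
    and "\<And>y. y \<in> C \<Longrightarrow> (g has_real_derivative g' y) (at y)"
    and "\<And>y. y \<in> C \<Longrightarrow> (g' has_real_derivative g'' y) (at y)"
    and "\<And>y. y \<in> C \<Longrightarrow> f'' y \<le> g'' y"
    and "f c = g c" "f' c = g' c"
  shows "f x \<le> g x"
proof -
  have "(g' c - f' c) * (x - c) \<le> (g x - f x) - (g c - f c)"
    using assms by (intro f''_imp_f'[where f'' = "\<lambda>y. g'' y - f'' y"]) (auto intro!: DERIV_diff)
  then show ?thesis using assms(9,10) by simp
qed

text \<open>The linear term normalises \<open>phi_gen t 1 = phi_gen_deriv t 1 = 0\<close>; it does not change the
  weighted sums below, whose weighted mean of the arguments is 1 (\<open>sum_weighted_phi_gen\<close>).\<close>

definition phi_gen :: "real \<Rightarrow> real \<Rightarrow> real" where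
  "phi_gen t x =
     (if t = 0 then x - 1 - ln x
      else if t = 1 then x * ln x - x + 1
      else (x powr t - 1 - t * (x - 1)) / (t * (t - 1)))"

definition phi_gen_deriv :: "real \<Rightarrow> real \<Rightarrow> real" where
  "phi_gen_deriv t x =
     (if t = 0 then 1 - 1 / x
      else if t = 1 then ln x
      else (x powr (t - 1) - 1) / (t - 1))"

lemma phi_gen_one [simp]: "phi_gen t 1 = 0"
  by (simp add: phi_gen_def)

lemma phi_gen_deriv_one [simp]: "phi_gen_deriv t 1 = 0"
  by (simp add: phi_gen_deriv_def)

lemma has_real_derivative_phi_gen:
  assumes "0 < x"
  shows "(phi_gen t has_real_derivative phi_gen_deriv t x) (at x)"
proof -
  consider "t = 0" | "t = 1" | "t \<noteq> 0" "t \<noteq> 1" by blast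
  then show ?thesis
  proof cases
    case 1
    have "((\<lambda>x. x - 1 - ln x) has_real_derivative 1 - 1 / x) (at x)"
      using assms by (auto intro!: derivative_eq_intros simp: field_simps)
    then show ?thesis by (simp add: 1 phi_gen_def[abs_def] phi_gen_deriv_def)
  next
    case 2
    have "((\<lambda>x. x * ln x - x + 1) has_real_derivative ln x) (at x)"
      using assms by (auto intro!: derivative_eq_intros simp: field_simps)
    then show ?thesis by (simp add: 2 phi_gen_def[abs_def] phi_gen_deriv_def)
  next
    case 3
    have "((\<lambda>x. (x powr t - 1 - t * (x - 1)) / (t * (t - 1))) has_real_derivative
        (t * x powr (t - 1) - t) / (t * (t - 1))) (at x)"
      using assms 3 by (auto intro!: derivative_eq_intros)
    moreover have "(t * x powr (t - 1) - t) / (t * (t - 1)) = (x powr (t - 1) - 1) / (t - 1)"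
      using 3 by (simp add: field_simps)
    ultimately show ?thesis using 3 by (simp add: phi_gen_def[abs_def] phi_gen_deriv_def)
  qed
qed

lemma has_real_derivative_phi_gen_deriv:
  assumes "0 < x"
  shows "(phi_gen_deriv t has_real_derivative x powr (t - 2)) (at x)"
proof -
  consider "t = 0" | "t = 1" | "t \<noteq> 0" "t \<noteq> 1" by blast
  then show ?thesis
  proof cases
    case 1
    have "((\<lambda>x. 1 - 1 / x) has_real_derivative 1 / x\<^sup>2) (at x)"
      using assms by (auto intro!: derivative_eq_intros simp: field_simps power2_eq_square)
    moreover have "x powr (0 - 2) = 1 / x\<^sup>2"
      using assms by (simp add: powr_minus powr_realpow divide_inverse)
    ultimately show ?thesis by (simp add: 1 phi_gen_deriv_def[abs_def])
  next
    case 2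
    have "(ln has_real_derivative 1 / x) (at x)"
      using assms by (auto intro!: derivative_eq_intros)
    moreover have "x powr (1 - 2) = 1 / x"
      using assms by (simp add: powr_minus divide_inverse)
    ultimately show ?thesis by (simp add: 2 phi_gen_deriv_def[abs_def])
  next
    case 3
    have "((\<lambda>x. (x powr (t - 1) - 1) / (t - 1)) has_real_derivative
        ((t - 1) * x powr (t - 1 - 1)) / (t - 1)) (at x)"
      using assms 3 by (auto intro!: derivative_eq_intros)
    then show ?thesis using 3 by (simp add: phi_gen_deriv_def[abs_def])
  qed
qed

lemma has_real_derivative_phi_gen_midpoint:
  assumes "0 < x"
  shows "((\<lambda>x. phi_gen s ((x + 1) / 2)) has_real_derivative phi_gen_deriv s ((x + 1) / 2) / 2) (at x)"
    and "((\<lambda>x. phi_gen_deriv s ((x + 1) / 2) / 2) has_real_derivative ((x + 1) / 2) powr (s - 2) / 4) (at x)"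
proof -
  have mid: "0 < (x + 1) / 2" using assms by simp
  have affine: "((\<lambda>x. (x + 1) / 2) has_real_derivative 1 / 2) (at x)"
    by (auto intro!: derivative_eq_intros)
  show "((\<lambda>x. phi_gen s ((x + 1) / 2)) has_real_derivative phi_gen_deriv s ((x + 1) / 2) / 2) (at x)"
    using DERIV_chain2[OF has_real_derivative_phi_gen[OF mid] affine] by simp
  show "((\<lambda>x. phi_gen_deriv s ((x + 1) / 2) / 2) has_real_derivative ((x + 1) / 2) powr (s - 2) / 4) (at x)"
    using DERIV_cdivide[OF DERIV_chain2[OF has_real_derivative_phi_gen_deriv[OF mid] affine], where c = 2]
    by simp
qed

lemma sum_weighted_phi_gen:
  fixes w x :: "'a \<Rightarrow> real"
  assumes mean: "(\<Sum>i\<in>I. w i * x i) = (\<Sum>i\<in>I. w i)"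
  shows "(\<Sum>i\<in>I. w i * phi_gen t (x i)) =
    (if t = 0 then - (\<Sum>i\<in>I. w i * ln (x i))
     else if t = 1 then (\<Sum>i\<in>I. w i * x i * ln (x i))
     else ((\<Sum>i\<in>I. w i * x i powr t) - (\<Sum>i\<in>I. w i)) / (t * (t - 1)))"
proof -
  consider "t = 0" | "t = 1" | "t \<noteq> 0" "t \<noteq> 1" by blast
  then show ?thesis
  proof cases
    case 1
    have "(\<Sum>i\<in>I. w i * phi_gen t (x i)) =
        (\<Sum>i\<in>I. w i * x i) - (\<Sum>i\<in>I. w i) - (\<Sum>i\<in>I. w i * ln (x i))"
      by (simp add: 1 phi_gen_def algebra_simps sum_subtractf sum.distrib)
    then show ?thesis using 1 mean by simp
  next
    case 2
    have "(\<Sum>i\<in>I. w i * phi_gen t (x i)) =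
        (\<Sum>i\<in>I. w i * x i * ln (x i)) - (\<Sum>i\<in>I. w i * x i) + (\<Sum>i\<in>I. w i)"
      by (simp add: 2 phi_gen_def algebra_simps sum_subtractf sum.distrib)
    then show ?thesis using 2 mean by simp
  next
    case 3
    have "(\<Sum>i\<in>I. w i * phi_gen t (x i)) =
        ((\<Sum>i\<in>I. w i * x i powr t) - (\<Sum>i\<in>I. w i)
          - t * ((\<Sum>i\<in>I. w i * x i) - (\<Sum>i\<in>I. w i))) / (t * (t - 1))"
      by (simp add: 3 phi_gen_def sum_divide_distrib[symmetric] sum_subtractf sum_distrib_left
          right_diff_distrib mult_ac)
    then show ?thesis using 3 mean by simp
  qed
qed

lemma Gamma_pos: "p \<in> Gamma n \<Longrightarrow> i < n \<Longrightarrow> 0 < p i"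
  by (simp add: Gamma_def)

lemma Gamma_sum: "p \<in> Gamma n \<Longrightarrow> (\<Sum>i<n. p i) = 1"
  by (simp add: Gamma_def)

lemma Gamma_sum_ratio:
  assumes "p \<in> Gamma n" "q \<in> Gamma n"
  shows "(\<Sum>i<n. q i * (p i / q i)) = 1"
proof -
  have "q i * (p i / q i) = p i" if "i < n" for i
    using Gamma_pos[OF assms(2) that] by simp
  then show ?thesis using Gamma_sum[OF assms(1)] by simp
qed

lemma Gamma_ratio_bounds:
  assumes "p \<in> Gamma n" "q \<in> Gamma n" and "\<forall>i<n. r \<le> p i / q i \<and> p i / q i \<le> R"
  shows "r \<le> 1" "1 \<le> R"
proof -
  have "(\<Sum>i<n. q i * r) \<le> (\<Sum>i<n. q i * (p i / q i))"
    and "(\<Sum>i<n. q i * (p i / q i)) \<le> (\<Sum>i<n. q i * R)"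
    using assms by (intro sum_mono mult_left_mono; auto simp: Gamma_pos less_imp_le)+
  then show "r \<le> 1" "1 \<le> R"
    by (simp_all only: Gamma_sum_ratio[OF assms(1,2)] sum_distrib_right[symmetric]
        Gamma_sum[OF assms(2)] mult_1_left)
qed

lemma Phi_eq_sum_phi_gen:
  assumes "p \<in> Gamma n" "q \<in> Gamma n"
  shows "Phi n t p q = (\<Sum>i<n. q i * phi_gen t (p i / q i))"
proof -
  have mean: "(\<Sum>i<n. q i * (p i / q i)) = (\<Sum>i<n. q i)"
    by (simp only: Gamma_sum_ratio[OF assms] Gamma_sum[OF assms(2)])
  have "q i * ln (p i / q i) = - (q i * ln (q i / p i))"
    and "q i * (p i / q i) = p i"
    and "q i * (p i / q i) powr t = p i powr t * q i powr (1 - t)"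
    if "i < n" for i
    using Gamma_pos[OF assms(1) that] Gamma_pos[OF assms(2) that]
    by (simp_all add: ln_div powr_divide powr_diff algebra_simps)
  then show ?thesis
    unfolding sum_weighted_phi_gen[OF mean] Phi_def
    by (simp add: Gamma_sum[OF assms(2)] sum_negf del: times_divide_eq_right)
qed

lemma Omega_eq_sum_phi_gen:
  assumes "p \<in> Gamma n" "q \<in> Gamma n"
  shows "Omega n s q p = (\<Sum>i<n. q i * phi_gen s ((p i / q i + 1) / 2))"
proof -
  have mid: "(p i / q i + 1) / 2 = (p i + q i) / (2 * q i)"
    and weight: "q i * ((p i + q i) / (2 * q i)) = (p i + q i) / 2"
    and ln_flip: "q i * ln ((p i + q i) / (2 * q i)) = - (q i * ln (2 * q i / (p i + q i)))"
    if "i < n" for i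
    using Gamma_pos[OF assms(1) that] Gamma_pos[OF assms(2) that]
    by (simp_all add: field_simps ln_div)
  have "(\<Sum>i<n. q i * ((p i + q i) / (2 * q i))) = (\<Sum>i<n. (p i + q i) / 2)"
    by (intro sum.cong refl weight) simp
  also have "\<dots> = (\<Sum>i<n. q i)"
    using Gamma_sum[OF assms(1)] Gamma_sum[OF assms(2)]
    by (simp add: sum_divide_distrib[symmetric] sum.distrib)
  finally have mean: "(\<Sum>i<n. q i * ((p i + q i) / (2 * q i))) = (\<Sum>i<n. q i)" .
  have "(\<Sum>i<n. q i * phi_gen s ((p i / q i + 1) / 2)) =
      (\<Sum>i<n. q i * phi_gen s ((p i + q i) / (2 * q i)))"
    by (simp add: mid)
  with sum_weighted_phi_gen[OF mean] show ?thesis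
    unfolding Omega_def
    by (simp add: weight sum_negf Gamma_sum[OF assms(2)] ln_flip
        del: times_divide_eq_right)
qed

text \<open>The ratio of the second derivatives of \<open>x \<mapsto> phi_gen s ((x + 1) / 2)\<close> and \<open>phi_gen t\<close>.\<close>

definition curvature_ratio :: "real \<Rightarrow> real \<Rightarrow> real \<Rightarrow> real" where
  "curvature_ratio s t y = 1 / (4 * y powr (t - 2)) * ((y + 1) / 2) powr (s - 2)"

lemma curvature_ratio_mult_powr:
  assumes "0 < y"
  shows "curvature_ratio s t y * y powr (t - 2) = ((y + 1) / 2) powr (s - 2) / 4"
  using assms by (simp add: curvature_ratio_def)

lemma curvature_ratio_factor:
  assumes "0 < y"
  shows "curvature_ratio s t y = ((y + 1) / 2) powr (s - t) * ((1 / y + 1) / 2) powr (t - 2) / 4"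
proof -
  have "(1 / y + 1) / 2 = ((y + 1) / 2) / y" using assms by (simp add: field_simps)
  then have "((1 / y + 1) / 2) powr (t - 2) = ((y + 1) / 2) powr (t - 2) / y powr (t - 2)"
    using assms by (simp only: powr_divide[of "(y + 1) / 2" y] less_imp_le)
  then show ?thesis
    by (simp add: curvature_ratio_def powr_add[symmetric])
qed

lemma curvature_ratio_mono:
  assumes "t \<le> s" "t \<le> 2" "0 < a" "a \<le> b"
  shows "curvature_ratio s t a \<le> curvature_ratio s t b"
proof -
  have "((a + 1) / 2) powr (s - t) \<le> ((b + 1) / 2) powr (s - t)"
    using assms by (intro powr_mono2) auto
  moreover have "((1 / a + 1) / 2) powr (t - 2) \<le> ((1 / b + 1) / 2) powr (t - 2)"
    using assms by (intro powr_mono2') (auto simp: frac_le add_pos_pos)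
  ultimately show ?thesis
    using assms by (simp add: curvature_ratio_factor mult_mono divide_right_mono)
qed

lemma curvature_ratio_antimono:
  assumes "s \<le> t" "2 \<le> t" "0 < a" "a \<le> b"
  shows "curvature_ratio s t b \<le> curvature_ratio s t a"
proof -
  have "((b + 1) / 2) powr (s - t) \<le> ((a + 1) / 2) powr (s - t)"
    using assms by (intro powr_mono2') auto
  moreover have "((1 / b + 1) / 2) powr (t - 2) \<le> ((1 / a + 1) / 2) powr (t - 2)"
    using assms by (intro powr_mono2) (auto simp: frac_le add_pos_pos)
  ultimately show ?thesis
    using assms by (simp add: curvature_ratio_factor mult_mono divide_right_mono)
qed

lemma phi_gen_le_phi_gen_midpoint:
  assumes "0 < a" "a \<le> 1" "1 \<le> b" "x \<in> {a..b}"
    and "\<And>y. y \<in> {a..b} \<Longrightarrow> c \<le> curvature_ratio s t y"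
  shows "c * phi_gen t x \<le> phi_gen s ((x + 1) / 2)"
proof (rule le_by_second_derivative[where C = "{a..b}" and c = 1
    and f = "\<lambda>x. c * phi_gen t x" and g = "\<lambda>x. phi_gen s ((x + 1) / 2)"
    and f' = "\<lambda>x. c * phi_gen_deriv t x" and f'' = "\<lambda>x. c * x powr (t - 2)"
    and g' = "\<lambda>x. phi_gen_deriv s ((x + 1) / 2) / 2" and g'' = "\<lambda>x. ((x + 1) / 2) powr (s - 2) / 4"])
  fix y assume y: "y \<in> {a..b}"
  then have "0 < y" using assms(1) by simp
  then show "((\<lambda>x. c * phi_gen t x) has_real_derivative c * phi_gen_deriv t y) (at y)"
    and "((\<lambda>x. c * phi_gen_deriv t x) has_real_derivative c * y powr (t - 2)) (at y)"
    and "((\<lambda>x. phi_gen s ((x + 1) / 2)) has_real_derivative phi_gen_deriv s ((y + 1) / 2) / 2) (at y)"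
    and "((\<lambda>x. phi_gen_deriv s ((x + 1) / 2) / 2) has_real_derivative ((y + 1) / 2) powr (s - 2) / 4) (at y)"
    by (auto intro: DERIV_cmult has_real_derivative_phi_gen has_real_derivative_phi_gen_deriv
        has_real_derivative_phi_gen_midpoint)
  have "c * y powr (t - 2) \<le> curvature_ratio s t y * y powr (t - 2)"
    using assms(5)[OF y] by (simp add: mult_right_mono)
  with \<open>0 < y\<close> show "c * y powr (t - 2) \<le> ((y + 1) / 2) powr (s - 2) / 4"
    by (simp add: curvature_ratio_mult_powr)
qed (use assms in auto)

lemma phi_gen_midpoint_le_phi_gen:
  assumes "0 < a" "a \<le> 1" "1 \<le> b" "x \<in> {a..b}"
    and "\<And>y. y \<in> {a..b} \<Longrightarrow> curvature_ratio s t y \<le> c"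
  shows "phi_gen s ((x + 1) / 2) \<le> c * phi_gen t x"
proof (rule le_by_second_derivative[where C = "{a..b}" and c = 1
    and g = "\<lambda>x. c * phi_gen t x" and f = "\<lambda>x. phi_gen s ((x + 1) / 2)"
    and g' = "\<lambda>x. c * phi_gen_deriv t x" and g'' = "\<lambda>x. c * x powr (t - 2)"
    and f' = "\<lambda>x. phi_gen_deriv s ((x + 1) / 2) / 2" and f'' = "\<lambda>x. ((x + 1) / 2) powr (s - 2) / 4"])
  fix y assume y: "y \<in> {a..b}"
  then have "0 < y" using assms(1) by simp
  then show "((\<lambda>x. c * phi_gen t x) has_real_derivative c * phi_gen_deriv t y) (at y)"
    and "((\<lambda>x. c * phi_gen_deriv t x) has_real_derivative c * y powr (t - 2)) (at y)"
    and "((\<lambda>x. phi_gen s ((x + 1) / 2)) has_real_derivative phi_gen_deriv s ((y + 1) / 2) / 2) (at y)"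
    and "((\<lambda>x. phi_gen_deriv s ((x + 1) / 2) / 2) has_real_derivative ((y + 1) / 2) powr (s - 2) / 4) (at y)"
    by (auto intro: DERIV_cmult has_real_derivative_phi_gen has_real_derivative_phi_gen_deriv
        has_real_derivative_phi_gen_midpoint)
  have "curvature_ratio s t y * y powr (t - 2) \<le> c * y powr (t - 2)"
    using assms(5)[OF y] by (simp add: mult_right_mono)
  with \<open>0 < y\<close> show "((y + 1) / 2) powr (s - 2) / 4 \<le> c * y powr (t - 2)"
    by (simp add: curvature_ratio_mult_powr)
qed (use assms in auto)

lemma Omega_lower_bound:
  assumes "p \<in> Gamma n" "q \<in> Gamma n" "0 < r"
    and ratio: "\<forall>i<n. r \<le> p i / q i \<and> p i / q i \<le> R"
    and "\<And>y. y \<in> {r..R} \<Longrightarrow> c \<le> curvature_ratio s t y"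
  shows "c * Phi n t p q \<le> Omega n s q p"
proof -
  have "c * phi_gen t (p i / q i) \<le> phi_gen s ((p i / q i + 1) / 2)" if "i < n" for i
    using assms(3,5) ratio that Gamma_ratio_bounds[OF assms(1,2) ratio]
    by (intro phi_gen_le_phi_gen_midpoint) auto
  then have "(\<Sum>i<n. q i * (c * phi_gen t (p i / q i))) \<le> (\<Sum>i<n. q i * phi_gen s ((p i / q i + 1) / 2))"
    using Gamma_pos[OF assms(2)] by (intro sum_mono mult_left_mono) (auto simp: less_imp_le)
  then show ?thesis
    by (simp add: Phi_eq_sum_phi_gen[OF assms(1,2)] Omega_eq_sum_phi_gen[OF assms(1,2)]
        sum_distrib_left mult.left_commute)
qed

lemma Omega_upper_bound:
  assumes "p \<in> Gamma n" "q \<in> Gamma n" "0 < r"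
    and ratio: "\<forall>i<n. r \<le> p i / q i \<and> p i / q i \<le> R"
    and "\<And>y. y \<in> {r..R} \<Longrightarrow> curvature_ratio s t y \<le> c"
  shows "Omega n s q p \<le> c * Phi n t p q"
proof -
  have "phi_gen s ((p i / q i + 1) / 2) \<le> c * phi_gen t (p i / q i)" if "i < n" for i
    using assms(3,5) ratio that Gamma_ratio_bounds[OF assms(1,2) ratio]
    by (intro phi_gen_midpoint_le_phi_gen) auto
  then have "(\<Sum>i<n. q i * phi_gen s ((p i / q i + 1) / 2)) \<le> (\<Sum>i<n. q i * (c * phi_gen t (p i / q i)))"
    using Gamma_pos[OF assms(2)] by (intro sum_mono mult_left_mono) (auto simp: less_imp_le)
  then show ?thesis
    by (simp add: Phi_eq_sum_phi_gen[OF assms(1,2)] Omega_eq_sum_phi_gen[OF assms(1,2)]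
        sum_distrib_left mult.left_commute)
qed

theorem theorem4p1:
  fixes n :: nat and p q :: "nat \<Rightarrow> real" and r R s t :: real
  assumes "n \<ge> 2"
    and "p \<in> Gamma n" and "q \<in> Gamma n"
    and "0 < r" and "r \<le> R"
    and "\<forall>i<n. r \<le> p i / q i \<and> p i / q i \<le> R"
  shows "(s \<ge> t \<and> t \<le> 2 \<longrightarrow>
            1 / (4 * r powr (t - 2)) * ((r + 1) / 2) powr (s - 2) * Phi n t p q \<le> Omega n s q p \<and>
            Omega n s q p \<le> 1 / (4 * R powr (t - 2)) * ((R + 1) / 2) powr (s - 2) * Phi n t p q)
       \<and> (s \<le> t \<and> t \<ge> 2 \<longrightarrow>
            1 / (4 * R powr (t - 2)) * ((R + 1) / 2) powr (s - 2) * Phi n t p q \<le> Omega n s q p \<and>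
            Omega n s q p \<le> 1 / (4 * r powr (t - 2)) * ((r + 1) / 2) powr (s - 2) * Phi n t p q)"
  unfolding curvature_ratio_def[symmetric]
proof (intro conjI impI; elim conjE)
  assume "t \<le> s" "t \<le> 2"
  then have "curvature_ratio s t r \<le> curvature_ratio s t y" "curvature_ratio s t y \<le> curvature_ratio s t R"
    if "y \<in> {r..R}" for y
    using that \<open>0 < r\<close> by (auto intro: curvature_ratio_mono)
  then show "curvature_ratio s t r * Phi n t p q \<le> Omega n s q p"
    and "Omega n s q p \<le> curvature_ratio s t R * Phi n t p q"
    using assms(2-4,6) by (auto intro: Omega_lower_bound Omega_upper_bound)
next
  assume "s \<le> t" "2 \<le> t"
  then have "curvature_ratio s t R \<le> curvature_ratio s t y" "curvature_ratio s t y \<le> curvature_ratio s t r"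
    if "y \<in> {r..R}" for y
    using that \<open>0 < r\<close> by (auto intro: curvature_ratio_antimono)
  then show "curvature_ratio s t R * Phi n t p q \<le> Omega n s q p"
    and "Omega n s q p \<le> curvature_ratio s t r * Phi n t p q"
    using assms(2-4,6) by (auto intro: Omega_lower_bound Omega_upper_bound)
qed

end
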